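(* Let $\epsilon,\delta>0$ and let $\mathrm{Unlearn}$ be an $(\epsilon,\delta)$-certified removal unlearning algorithm (with respect to the learning algorithm $\mathrm{Learn}$ and the finite dataset $\mathcal{D}$). Then for any (not necessarily efficient) adversary $\mathcal{A}$ in the unlearning sample inference game with parameters $\mathcal{D},\mathbb{P}_{\mathcal{D}},\alpha$, $$\mathrm{Adv}(\mathcal{A},\mathrm{Unlearn})\le 2\Big(1-\frac{2-2\delta}{e^{\epsilon}+1}\Big).$$ Consequently $\mathcal{Q}(\mathrm{Unlearn})\ge \frac{4-4\delta}{e^{\epsilon}+1}-1$.
   Context: Unlearning sample inference game. $\mathcal{D}$ is a finite dataset with a "sensitivity distribution" $\mathbb{P}_{\mathcal{D}}$ on $\mathcal{D}$ (assumed to have full support), and $\alpha\in(0,1)$ is the unlearning portion. $\mathcal{S}_\alpha$ is the (finite, assumed nonempty) set of all ordered triples $s=(\mathcal{R},\mathcal{F},\mathcal{T})$ of pairwise disjoint subsets of $\mathcal{D}$ with $\mathcal{R}\cup\mathcal{F}\cup\mathcal{T}=\mathcal{D}$, $|\mathcal{F}|/|\mathcal{R}\cup\mathcal{F}|=\alpha$ and $|\mathcal{F}|=|\mathcal{T}|$. For $s\in\mathcal{S}_\alpha$ and $b\in\{0,1\}$, the random oracle $\mathcal{O}_s(b)$, each time it is queried, returns an independent sample from $\mathbb{P}_{\mathcal{D}}$ conditioned on $\mathcal{F}$ if $b=0$, and conditioned on $\mathcal{T}$ if $b=1$. A learning algorithm $\mathrm{Learn}$ is a randomized map from datasets to models;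 an unlearning algorithm $\mathrm{Unlearn}$ is a randomized map taking a model and a subset of data and returning a model; $\mathrm{Retrain}$ denotes the method with $\mathrm{Retrain}(\mathrm{Learn}(\mathcal{R}\cup\mathcal{F}),\mathcal{F})=\mathrm{Learn}(\mathcal{R})$. For $s=(\mathcal{R},\mathcal{F},\mathcal{T})$, $\mathbb{P}_{\mathcal{M}}(\mathrm{Unlearn},s)$ is the distribution of $\mathrm{Unlearn}(\mathrm{Learn}(\mathcal{R}\cup\mathcal{F}),\mathcal{F})$. An adversary $\mathcal{A}$ is a (possibly randomized) algorithm given access to a model $m$ and an oracle $\mathcal{O}$ (queried repeatedly, independent of $m$ given $s$), outputting a bit $\mathcal{A}^{\mathcal{O}}(m)$. The advantage is $$\mathrm{Adv}(\mathcal{A},\mathrm{Unlearn})=\frac{1}{|\mathcal{S}_\alpha|}\Big|\sum_{s\in\mathcal{S}_\alpha}\Pr_{m\sim\mathbb{P}_{\mathcal{M}}(\mathrm{Unlearn},s),\,\mathcal{O}=\mathcal{O}_s(0)}(\mathcal{A}^{\mathcal{O}}(m)=1)-\sum_{s\in\mathcal{S}_\alpha}\Pr_{m\sim\mathbb{P}_{\mathcal{M}}(\mathrm{Unlearn},s),\,\mathcal{O}=\mathcal{O}_s(1)}(\mathcal{A}^{\mathcal{O}}(m)=1)\Big|,$$ and $\mathcal{Q}(\mathrm{Unlearn})=1-\sup_{\mathcal{A}}\mathrm{Adv}(\mathcal{A},\mathrm{Unlearn})$. Certified removal: letting $\mathcal{H}$ be the set of all models producible by $\mathrm{Learn}$ and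 $\mathrm{Unlearn}$, $\mathrm{Unlearn}$ is $(\epsilon,\delta)$-certified removal if for every measurable $\mathcal{W}\subseteq\mathcal{H}$ and every pair of disjoint $\mathcal{R},\mathcal{F}\subseteq\mathcal{D}$ (no size constraints), $\Pr(\mathrm{Unlearn}(\mathrm{Learn}(\mathcal{R}\cup\mathcal{F}),\mathcal{F})\in\mathcal{W})\le e^{\epsilon}\Pr(\mathrm{Learn}(\mathcal{R})\in\mathcal{W})+\delta$ and $\Pr(\mathrm{Learn}(\mathcal{R})\in\mathcal{W})\le e^{\epsilon}\Pr(\mathrm{Unlearn}(\mathrm{Learn}(\mathcal{R}\cup\mathcal{F}),\mathcal{F})\in\mathcal{W})+\delta$. *)

theory Defs
  imports "HOL-Probability.Probability"
begin

definition splits :: "'d set \<Rightarrow> real \<Rightarrow> ('d set \<times> 'd set \<times> 'd set) set" where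
  "splits D \<alpha> = {(R, F, T). R \<union> F \<union> T = D \<and> R \<inter> F = {} \<and> R \<inter> T = {} \<and> F \<inter> T = {}
      \<and> real (card F) / real (card (R \<union> F)) = \<alpha> \<and> card F = card T}"

definition transcript_space :: "(nat \<Rightarrow> 'd) measure" where
  "transcript_space = PiM UNIV (\<lambda>_. count_space UNIV)"

definition query_oracle :: "'d pmf \<Rightarrow> 'd set \<Rightarrow> (nat \<Rightarrow> 'd) measure" where
  "query_oracle P X = PiM UNIV (\<lambda>_. measure_pmf (cond_pmf P X))"

definition unlearned_dist ::
  "('d set \<Rightarrow> 'm measure) \<Rightarrow> ('m \<Rightarrow> 'd set \<Rightarrow> 'm measure) \<Rightarrow> 'd set \<Rightarrow> 'd set \<Rightarrow> 'm measure" where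
  "unlearned_dist Learn Unlearn R F = Learn (R \<union> F) \<bind> (\<lambda>m. Unlearn m F)"

definition certified_removal ::
  "'m measure \<Rightarrow> ('d set \<Rightarrow> 'm measure) \<Rightarrow> ('m \<Rightarrow> 'd set \<Rightarrow> 'm measure) \<Rightarrow> 'd set
   \<Rightarrow> real \<Rightarrow> real \<Rightarrow> bool" where
  "certified_removal M Learn Unlearn D \<epsilon> \<delta> \<longleftrightarrow>
     (\<forall>R F W. R \<subseteq> D \<longrightarrow> F \<subseteq> D \<longrightarrow> R \<inter> F = {} \<longrightarrow> W \<in> sets M \<longrightarrow>
        measure (unlearned_dist Learn Unlearn R F) W \<le> exp \<epsilon> * measure (Learn R) W + \<delta> \<and>
        measure (Learn R) W \<le> exp \<epsilon> * measure (unlearned_dist Learn Unlearn R F) W + \<delta>)"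

text \<open>A (possibly randomized) adversary is represented by the probability A m \<omega> with which it
  outputs 1, given the model m and the stream \<omega> of answers of the query oracle (any adaptive query strategy
  only looks at a finite prefix of this stream); its internal randomness is absorbed in A.\<close>
definition adversaries :: "'m measure \<Rightarrow> ('m \<Rightarrow> (nat \<Rightarrow> 'd) \<Rightarrow> real) set" where
  "adversaries M = {A. case_prod A \<in> borel_measurable (M \<Otimes>\<^sub>M transcript_space)
                        \<and> (\<forall>m \<omega>. 0 \<le> A m \<omega> \<and> A m \<omega> \<le> 1)}"

definition out1_prob :: "('m \<Rightarrow> (nat \<Rightarrow> 'd) \<Rightarrow> real) \<Rightarrow> 'm measure \<Rightarrow> (nat \<Rightarrow> 'd) measure \<Rightarrow> real" where
  "out1_prob A Mdist Od = (\<integral>x. case_prod A x \<partial>(Mdist \<Otimes>\<^sub>M Od))"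

definition advantage ::
  "'d set \<Rightarrow> 'd pmf \<Rightarrow> real \<Rightarrow> ('d set \<Rightarrow> 'm measure) \<Rightarrow> ('m \<Rightarrow> 'd set \<Rightarrow> 'm measure)
   \<Rightarrow> ('m \<Rightarrow> (nat \<Rightarrow> 'd) \<Rightarrow> real) \<Rightarrow> real" where
  "advantage D P \<alpha> Learn Unlearn A =
     (1 / real (card (splits D \<alpha>))) *
     \<bar>(\<Sum>(R, F, T)\<in>splits D \<alpha>. out1_prob A (unlearned_dist Learn Unlearn R F) (query_oracle P F))
      - (\<Sum>(R, F, T)\<in>splits D \<alpha>. out1_prob A (unlearned_dist Learn Unlearn R F) (query_oracle P T))\<bar>"

definition quality ::
  "'m measure \<Rightarrow> 'd set \<Rightarrow> 'd pmf \<Rightarrow> real \<Rightarrow> ('d set \<Rightarrow> 'm measure) \<Rightarrow> ('m \<Rightarrow> 'd set \<Rightarrow> 'm measure) \<Rightarrow> real" where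
  "quality M D P \<alpha> Learn Unlearn = 1 - (SUP A\<in>adversaries M. advantage D P \<alpha> Learn Unlearn A)"

end

theory Submission
  imports Defs
begin

text \<open>Two-sided \<open>(\<epsilon>, \<delta>)\<close>-closeness of probability measures, applied to an event and to its
  complement, bounds their total variation distance by \<open>c = (e\<^sup>\<epsilon> - 1 + 2\<delta>) / (e\<^sup>\<epsilon> + 1)\<close>; by
  the layer-cake formula the same bound holds for expectations of \<open>[0, 1]\<close>-valued functions.
  Comparing both \<open>Unlearn(Learn(R \<union> F), F)\<close> and \<open>Unlearn(Learn(R \<union> T), T)\<close> with \<open>Learn R\<close>, an
  adversary's success probabilities on the split \<open>(R, F, T)\<close> and on the swapped split
  \<open>(R, T, F)\<close> differ by at most \<open>2c\<close>. Swapping \<open>F\<close> and \<open>T\<close> is a bijection of the splits, so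
  the advantage, an average of such differences, is at most \<open>2c\<close>.\<close>

lemma nn_integral_layer_cake:
  assumes "prob_space N" and h[measurable]: "h \<in> borel_measurable N"
    and h0: "\<And>x. 0 \<le> h x" and h1: "\<And>x. h x \<le> 1"
  shows "(\<integral>\<^sup>+x. ennreal (h x) \<partial>N) =
    (\<integral>\<^sup>+t. indicator {0..1} t * emeasure N {x\<in>space N. t < h x} \<partial>lborel)"
proof -
  interpret N: prob_space N by fact
  interpret pair_sigma_finite lborel N by unfold_locales
  define f where "f = (\<lambda>(t::real) x. indicator {0..1} t * (if t < h x then 1 else 0::ennreal))"
  have f_measurable: "case_prod f \<in> borel_measurable (lborel \<Otimes>\<^sub>M N)"
    unfolding f_def by measurable
  have "(\<integral>\<^sup>+x. ennreal (h x) \<partial>N) = (\<integral>\<^sup>+x. (\<integral>\<^sup>+t. f t x \<partial>lborel) \<partial>N)"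
  proof (rule nn_integral_cong)
    fix x
    have "(\<lambda>t. f t x) = indicator {0..<h x}"
      using h1[of x] by (auto simp: f_def indicator_def fun_eq_iff)
    then show "ennreal (h x) = (\<integral>\<^sup>+t. f t x \<partial>lborel)"
      using h0[of x] by simp
  qed
  also have "\<dots> = (\<integral>\<^sup>+t. (\<integral>\<^sup>+x. f t x \<partial>N) \<partial>lborel)"
    using Fubini'[OF f_measurable] by simp
  also have "\<dots> = (\<integral>\<^sup>+t. indicator {0..1} t * emeasure N {x\<in>space N. t < h x} \<partial>lborel)"
  proof (rule nn_integral_cong)
    fix t :: real
    have "(\<integral>\<^sup>+x. f t x \<partial>N) = indicator {0..1} t * (\<integral>\<^sup>+x. indicator {x\<in>space N. t < h x} x \<partial>N)"
      unfolding f_def by (subst nn_integral_cmult[symmetric]) (auto intro!: nn_integral_cong simp: indicator_def)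
    then show "(\<integral>\<^sup>+x. f t x \<partial>N) = indicator {0..1} t * emeasure N {x\<in>space N. t < h x}"
      by simp
  qed
  finally show ?thesis .
qed

lemma integral_le_integral_add_of_measure_le:
  assumes "prob_space \<mu>" "prob_space \<nu>" and sets_\<mu>: "sets \<mu> = sets M" and sets_\<nu>: "sets \<nu> = sets M"
    and "0 \<le> c" and measure_le: "\<And>W. W \<in> sets M \<Longrightarrow> measure \<mu> W \<le> measure \<nu> W + c"
    and h[measurable]: "h \<in> borel_measurable M" and h0: "\<And>x. 0 \<le> h x" and h1: "\<And>x. h x \<le> 1"
  shows "(\<integral>x. h x \<partial>\<mu>) \<le> (\<integral>x. h x \<partial>\<nu>) + c"
proof -
  interpret \<mu>: prob_space \<mu> by fact
  interpret \<nu>: prob_space \<nu> by fact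
  have space_\<mu>: "space \<mu> = space M" and space_\<nu>: "space \<nu> = space M"
    using sets_eq_imp_space_eq[OF sets_\<mu>] sets_eq_imp_space_eq[OF sets_\<nu>] by auto
  have h_\<mu>[measurable]: "h \<in> borel_measurable \<mu>" and h_\<nu>[measurable]: "h \<in> borel_measurable \<nu>"
    using h sets_\<mu> sets_\<nu> by (simp_all cong: measurable_cong_sets)
  define S where "S t = {x\<in>space M. t < h x}" for t
  have [measurable]: "S t \<in> sets M" for t
    unfolding S_def by measurable
  have "(\<lambda>t. emeasure \<nu> (Pair t -` {p \<in> space (lborel \<Otimes>\<^sub>M \<nu>). fst p < h (snd p)}))
          \<in> borel_measurable lborel"
    by (rule \<nu>.measurable_emeasure_Pair) measurable
  moreover have "Pair t -` {p \<in> space (lborel \<Otimes>\<^sub>M \<nu>). fst p < h (snd p)} = S t" for t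
    by (auto simp: S_def space_pair_measure space_\<nu>)
  ultimately have [measurable]: "(\<lambda>t. emeasure \<nu> (S t)) \<in> borel_measurable lborel"
    by simp
  have "(\<integral>\<^sup>+x. ennreal (h x) \<partial>\<mu>) = (\<integral>\<^sup>+t. indicator {0..1} t * emeasure \<mu> (S t) \<partial>lborel)"
    using nn_integral_layer_cake[OF \<mu>.prob_space_axioms h_\<mu> h0 h1] by (simp add: S_def space_\<mu>)
  also have "\<dots> \<le> (\<integral>\<^sup>+t. indicator {0..1} t * emeasure \<nu> (S t) + indicator {0..1} t * ennreal c \<partial>lborel)"
  proof (rule nn_integral_mono)
    fix t
    have "emeasure \<mu> (S t) \<le> emeasure \<nu> (S t) + ennreal c"
      using measure_le[of "S t"] \<open>0 \<le> c\<close>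
      by (simp add: \<mu>.emeasure_eq_measure \<nu>.emeasure_eq_measure ennreal_plus[symmetric] del: ennreal_plus)
    then show "indicator {0..1} t * emeasure \<mu> (S t) \<le> indicator {0..1} t * emeasure \<nu> (S t) + indicator {0..1} t * ennreal c"
      by (auto simp: indicator_def)
  qed
  also have "\<dots> = (\<integral>\<^sup>+t. indicator {0..1} t * emeasure \<nu> (S t) \<partial>lborel) + ennreal c"
    by (subst nn_integral_add) (auto simp: nn_integral_cmult_indicator mult.commute)
  also have "(\<integral>\<^sup>+t. indicator {0..1} t * emeasure \<nu> (S t) \<partial>lborel) = (\<integral>\<^sup>+x. ennreal (h x) \<partial>\<nu>)"
    using nn_integral_layer_cake[OF \<nu>.prob_space_axioms h_\<nu> h0 h1] by (simp add: S_def space_\<nu>)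
  finally have nn_le: "(\<integral>\<^sup>+x. ennreal (h x) \<partial>\<mu>) \<le> (\<integral>\<^sup>+x. ennreal (h x) \<partial>\<nu>) + ennreal c" .
  have "(\<integral>\<^sup>+x. ennreal (h x) \<partial>\<nu>) \<le> (\<integral>\<^sup>+x. 1 \<partial>\<nu>)"
    by (rule nn_integral_mono) (use h1 in auto)
  then have finite_\<nu>: "(\<integral>\<^sup>+x. ennreal (h x) \<partial>\<nu>) < \<top>"
    by (simp add: \<nu>.emeasure_space_1 order_le_less_trans)
  have "(\<integral>x. h x \<partial>\<mu>) = enn2real (\<integral>\<^sup>+x. ennreal (h x) \<partial>\<mu>)"
    by (rule integral_eq_nn_integral) (use h0 in auto)
  also have "\<dots> \<le> enn2real ((\<integral>\<^sup>+x. ennreal (h x) \<partial>\<nu>) + ennreal c)"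
    by (rule enn2real_mono[OF nn_le]) (use finite_\<nu> in simp)
  also have "\<dots> = (\<integral>x. h x \<partial>\<nu>) + c"
    using finite_\<nu> \<open>0 \<le> c\<close> h0 by (simp add: enn2real_plus integral_eq_nn_integral)
  finally show ?thesis .
qed

lemma measure_le_add_of_indistinguishable:
  assumes "prob_space \<mu>" "prob_space \<nu>" "sets \<mu> = sets M" "sets \<nu> = sets M" "0 \<le> e"
    and indist: "\<And>W. W \<in> sets M \<Longrightarrow> measure \<mu> W \<le> e * measure \<nu> W + d \<and> measure \<nu> W \<le> e * measure \<mu> W + d"
    and W: "W \<in> sets M"
  shows "measure \<mu> W \<le> measure \<nu> W + (e - 1 + 2 * d) / (e + 1)"
proof -
  have "space M - W \<in> sets M"
    using W by auto
  moreover have "measure \<mu> (space M - W) = 1 - measure \<mu> W" "measure \<nu> (space M - W) = 1 - measure \<nu> W"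
    using prob_space.prob_compl[OF \<open>prob_space \<mu>\<close>, of W] prob_space.prob_compl[OF \<open>prob_space \<nu>\<close>, of W]
      W assms(3,4) sets_eq_imp_space_eq[of \<mu> M] sets_eq_imp_space_eq[of \<nu> M] by simp_all
  ultimately have "1 - measure \<nu> W \<le> e * (1 - measure \<mu> W) + d"
    using indist by fastforce
  with indist[OF W] have "(measure \<mu> W - measure \<nu> W) * (e + 1) \<le> e - 1 + 2 * d"
    by (simp add: algebra_simps)
  with \<open>0 \<le> e\<close> have "measure \<mu> W - measure \<nu> W \<le> (e - 1 + 2 * d) / (e + 1)"
    by (simp add: pos_le_divide_eq)
  then show ?thesis
    by simp
qed

lemma abs_integral_diff_le_of_indistinguishable:
  assumes "prob_space \<mu>" "prob_space \<nu>" "sets \<mu> = sets M" "sets \<nu> = sets M" "0 \<le> e" "0 \<le> d"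
    and indist: "\<And>W. W \<in> sets M \<Longrightarrow> measure \<mu> W \<le> e * measure \<nu> W + d \<and> measure \<nu> W \<le> e * measure \<mu> W + d"
    and "h \<in> borel_measurable M" "\<And>x. 0 \<le> h x" "\<And>x. h x \<le> 1"
  shows "\<bar>(\<integral>x. h x \<partial>\<mu>) - (\<integral>x. h x \<partial>\<nu>)\<bar> \<le> (e - 1 + 2 * d) / (e + 1)"
proof -
  note measure_le = measure_le_add_of_indistinguishable[of _ _ M e d]
  have "measure \<mu> (space M) \<le> measure \<nu> (space M) + (e - 1 + 2 * d) / (e + 1)"
    using measure_le[of \<mu> \<nu>] assms by blast
  moreover have "measure \<mu> (space M) = 1" "measure \<nu> (space M) = 1"
    using assms(1-4) sets_eq_imp_space_eq[of \<mu> M] sets_eq_imp_space_eq[of \<nu> M]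
    by (metis prob_space.prob_space)+
  ultimately have c_nonneg: "0 \<le> (e - 1 + 2 * d) / (e + 1)"
    by simp
  have "(\<integral>x. h x \<partial>\<mu>) \<le> (\<integral>x. h x \<partial>\<nu>) + (e - 1 + 2 * d) / (e + 1)"
    by (rule integral_le_integral_add_of_measure_le[of \<mu> \<nu> M])
       (use assms c_nonneg measure_le[of \<mu> \<nu>] in auto)
  moreover have "(\<integral>x. h x \<partial>\<nu>) \<le> (\<integral>x. h x \<partial>\<mu>) + (e - 1 + 2 * d) / (e + 1)"
    by (rule integral_le_integral_add_of_measure_le[of \<nu> \<mu> M])
       (use assms c_nonneg measure_le[of \<nu> \<mu>] in auto)
  ultimately show ?thesis
    by linarith
qed

lemma prob_space_query_oracle: "prob_space (query_oracle P X)"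
  unfolding query_oracle_def by (rule prob_space_PiM) (simp add: prob_space_measure_pmf)

lemma sets_query_oracle: "sets (query_oracle P X) = sets transcript_space"
  unfolding query_oracle_def transcript_space_def by (rule sets_PiM_cong) auto

lemma adversary_measurable:
  assumes "A \<in> adversaries M" "sets \<mu> = sets M" "sets N = sets transcript_space"
  shows "(\<lambda>(m, \<omega>). A m \<omega>) \<in> borel_measurable (\<mu> \<Otimes>\<^sub>M N)"
proof -
  have "sets (\<mu> \<Otimes>\<^sub>M N) = sets (M \<Otimes>\<^sub>M transcript_space)"
    by (rule sets_pair_measure_cong) (use assms in auto)
  with assms(1) show ?thesis
    unfolding adversaries_def by (simp cong: measurable_cong_sets)
qed

lemma adversary_bounds:
  assumes "A \<in> adversaries M"
  shows "0 \<le> A m \<omega>" "A m \<omega> \<le> 1"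
  using assms unfolding adversaries_def by auto

lemma oracle_average_of_adversary:
  assumes "A \<in> adversaries M"
  shows "(\<lambda>m. \<integral>\<omega>. A m \<omega> \<partial>query_oracle P X) \<in> borel_measurable M"
    and "0 \<le> (\<integral>\<omega>. A m \<omega> \<partial>query_oracle P X)"
    and "(\<integral>\<omega>. A m \<omega> \<partial>query_oracle P X) \<le> 1"
proof -
  interpret prob_space "query_oracle P X"
    by (rule prob_space_query_oracle)
  show "(\<lambda>m. \<integral>\<omega>. A m \<omega> \<partial>query_oracle P X) \<in> borel_measurable M"
    by (rule borel_measurable_lebesgue_integral)
       (use adversary_measurable[OF assms refl sets_query_oracle] in simp)
  show "0 \<le> (\<integral>\<omega>. A m \<omega> \<partial>query_oracle P X)"
    using adversary_bounds[OF assms] by (simp add: integral_nonneg)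
  show "(\<integral>\<omega>. A m \<omega> \<partial>query_oracle P X) \<le> 1"
  proof (cases "integrable (query_oracle P X) (A m)")
    case True
    then show ?thesis
      by (rule integral_le_const) (use adversary_bounds[OF assms] in auto)
  qed (simp add: not_integrable_integral_eq)
qed

lemma out1_prob_eq_integral_oracle_average:
  assumes A: "A \<in> adversaries M" and \<mu>: "\<mu> \<in> space (prob_algebra M)"
  shows "out1_prob A \<mu> (query_oracle P X) = (\<integral>m. (\<integral>\<omega>. A m \<omega> \<partial>query_oracle P X) \<partial>\<mu>)"
proof -
  have "prob_space \<mu>" and sets_\<mu>: "sets \<mu> = sets M"
    using \<mu> by (auto simp: space_prob_algebra)
  interpret pair_prob_space \<mu> "query_oracle P X"
    using \<open>prob_space \<mu>\<close> prob_space_query_oracle[of P X]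
    by (simp add: pair_prob_space_def pair_sigma_finite_def prob_space_imp_sigma_finite)
  have "integrable (\<mu> \<Otimes>\<^sub>M query_oracle P X) (\<lambda>(m, \<omega>). A m \<omega>)"
    by (rule P.integrable_const_bound[where B=1])
       (use adversary_bounds[OF A] adversary_measurable[OF A sets_\<mu> sets_query_oracle] in auto)
  then show ?thesis
    unfolding out1_prob_def by (simp add: integral_fst)
qed

lemma unlearned_dist_in_prob_algebra:
  assumes "Learn (R \<union> F) \<in> space (prob_algebra M)" "(\<lambda>m. Unlearn m F) \<in> M \<rightarrow>\<^sub>M prob_algebra M"
  shows "unlearned_dist Learn Unlearn R F \<in> space (prob_algebra M)"
  unfolding unlearned_dist_def space_prob_algebra
  using prob_space_bind'[OF assms] sets_bind'[OF assms] by simp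

lemma certified_removal_integral_close:
  assumes Learn: "\<And>X. X \<subseteq> D \<Longrightarrow> Learn X \<in> space (prob_algebra M)"
    and Unlearn: "\<And>F. F \<subseteq> D \<Longrightarrow> (\<lambda>m. Unlearn m F) \<in> M \<rightarrow>\<^sub>M prob_algebra M"
    and "certified_removal M Learn Unlearn D \<epsilon> \<delta>" "0 \<le> \<delta>"
    and "R \<subseteq> D" "F \<subseteq> D" "R \<inter> F = {}"
    and "h \<in> borel_measurable M" "\<And>x. 0 \<le> h x" "\<And>x. h x \<le> 1"
  shows "\<bar>(\<integral>x. h x \<partial>unlearned_dist Learn Unlearn R F) - (\<integral>x. h x \<partial>Learn R)\<bar>
           \<le> (exp \<epsilon> - 1 + 2 * \<delta>) / (exp \<epsilon> + 1)"
proof (rule abs_integral_diff_le_of_indistinguishable[of _ _ M])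
  have "unlearned_dist Learn Unlearn R F \<in> space (prob_algebra M)"
    using assms by (intro unlearned_dist_in_prob_algebra) auto
  then show "prob_space (unlearned_dist Learn Unlearn R F)" "sets (unlearned_dist Learn Unlearn R F) = sets M"
    by (auto simp: space_prob_algebra)
  show "prob_space (Learn R)" "sets (Learn R) = sets M"
    using Learn[of R] assms by (auto simp: space_prob_algebra)
qed (use assms in \<open>auto simp: certified_removal_def\<close>)

lemma finite_splits: "finite D \<Longrightarrow> finite (splits D \<alpha>)"
  by (rule finite_subset[of _ "Pow D \<times> Pow D \<times> Pow D"]) (auto simp: splits_def)

lemma splits_swap:
  assumes "finite D" "(R, F, T) \<in> splits D \<alpha>"
  shows "(R, T, F) \<in> splits D \<alpha>"
proof -
  have "finite R" "finite F" "finite T"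
    using assms by (auto simp: splits_def intro: finite_subset)
  then have "card (R \<union> T) = card (R \<union> F)"
    using assms(2) by (simp add: splits_def card_Un_disjoint)
  then show ?thesis
    using assms(2) unfolding splits_def by auto
qed

lemma out1_prob_unlearned_close:
  assumes "\<And>X. X \<subseteq> D \<Longrightarrow> Learn X \<in> space (prob_algebra M)"
    and "\<And>F. F \<subseteq> D \<Longrightarrow> (\<lambda>m. Unlearn m F) \<in> M \<rightarrow>\<^sub>M prob_algebra M"
    and "certified_removal M Learn Unlearn D \<epsilon> \<delta>" "0 \<le> \<delta>" and A: "A \<in> adversaries M"
    and "R \<subseteq> D" "F \<subseteq> D" "T \<subseteq> D" "R \<inter> F = {}" "R \<inter> T = {}"
  shows "\<bar>out1_prob A (unlearned_dist Learn Unlearn R F) (query_oracle P X)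
          - out1_prob A (unlearned_dist Learn Unlearn R T) (query_oracle P X)\<bar>
         \<le> 2 * ((exp \<epsilon> - 1 + 2 * \<delta>) / (exp \<epsilon> + 1))"
proof -
  let ?h = "\<lambda>m. \<integral>\<omega>. A m \<omega> \<partial>query_oracle P X"
  have close: "\<bar>(\<integral>m. ?h m \<partial>unlearned_dist Learn Unlearn R G) - (\<integral>m. ?h m \<partial>Learn R)\<bar>
      \<le> (exp \<epsilon> - 1 + 2 * \<delta>) / (exp \<epsilon> + 1)" if "G \<subseteq> D" "R \<inter> G = {}" for G
    by (rule certified_removal_integral_close[where D=D])
       (use assms that oracle_average_of_adversary[OF A, of P X] in auto)
  have "out1_prob A (unlearned_dist Learn Unlearn R F) (query_oracle P X)
        = (\<integral>m. ?h m \<partial>unlearned_dist Learn Unlearn R F)"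
    "out1_prob A (unlearned_dist Learn Unlearn R T) (query_oracle P X)
        = (\<integral>m. ?h m \<partial>unlearned_dist Learn Unlearn R T)"
    using assms by (auto intro!: out1_prob_eq_integral_oracle_average unlearned_dist_in_prob_algebra)
  with close[of F] close[of T] assms(7-) show ?thesis
    by linarith
qed

lemma advantage_le_of_certified_removal:
  assumes "finite D" "splits D \<alpha> \<noteq> {}"
    and Learn: "\<And>X. X \<subseteq> D \<Longrightarrow> Learn X \<in> space (prob_algebra M)"
    and Unlearn: "\<And>F. F \<subseteq> D \<Longrightarrow> (\<lambda>m. Unlearn m F) \<in> M \<rightarrow>\<^sub>M prob_algebra M"
    and CR: "certified_removal M Learn Unlearn D \<epsilon> \<delta>" and "0 \<le> \<delta>" and A: "A \<in> adversaries M"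
  shows "advantage D P \<alpha> Learn Unlearn A \<le> 2 * ((exp \<epsilon> - 1 + 2 * \<delta>) / (exp \<epsilon> + 1))"
proof -
  define S where "S = splits D \<alpha>"
  define c where "c = (exp \<epsilon> - 1 + 2 * \<delta>) / (exp \<epsilon> + 1)"
  define p where "p X R F = out1_prob A (unlearned_dist Learn Unlearn R F) (query_oracle P X)" for X R F
  have card_pos: "0 < card S"
    using assms(1,2) finite_splits by (auto simp: S_def card_gt_0_iff)
  have "(\<Sum>(R, F, T)\<in>S. p T R F) = (\<Sum>(R, F, T)\<in>S. p F R T)"
    by (rule sum.reindex_bij_witness[where i="\<lambda>(R, F, T). (R, T, F)" and j="\<lambda>(R, F, T). (R, T, F)"])
       (auto simp: S_def intro: splits_swap[OF \<open>finite D\<close>])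
  then have "\<bar>(\<Sum>(R, F, T)\<in>S. p F R F) - (\<Sum>(R, F, T)\<in>S. p T R F)\<bar>
             = \<bar>\<Sum>(R, F, T)\<in>S. p F R F - p F R T\<bar>"
    by (simp add: sum_subtractf case_prod_beta)
  also have "\<dots> \<le> (\<Sum>(R, F, T)\<in>S. \<bar>p F R F - p F R T\<bar>)"
    by (rule order_trans[OF sum_abs]) (simp add: case_prod_beta)
  also have "\<dots> \<le> (\<Sum>(R, F, T)\<in>S. 2 * c)"
    unfolding p_def c_def
    by (rule sum_mono, clarify, rule out1_prob_unlearned_close[OF Learn Unlearn CR \<open>0 \<le> \<delta>\<close> A])
       (auto simp: S_def splits_def)
  finally show ?thesis
    using card_pos by (simp add: advantage_def S_def p_def c_def divide_le_eq mult.commute)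
qed

theorem theorem3p6:
  fixes M :: "'m measure" and D :: "'d set" and P :: "'d pmf" and \<alpha> \<epsilon> \<delta> :: real
    and Learn :: "'d set \<Rightarrow> 'm measure" and Unlearn :: "'m \<Rightarrow> 'd set \<Rightarrow> 'm measure"
  assumes "finite D" and "set_pmf P = D"
    and "0 < \<alpha>" and "\<alpha> < 1" and "splits D \<alpha> \<noteq> {}"
    and "\<And>X. X \<subseteq> D \<Longrightarrow> Learn X \<in> space (prob_algebra M)"
    and "\<And>F. F \<subseteq> D \<Longrightarrow> (\<lambda>m. Unlearn m F) \<in> M \<rightarrow>\<^sub>M prob_algebra M"
    and "0 < \<epsilon>" and "0 < \<delta>"
    and "certified_removal M Learn Unlearn D \<epsilon> \<delta>"
  shows "(\<forall>A\<in>adversaries M.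
            advantage D P \<alpha> Learn Unlearn A \<le> 2 * (1 - (2 - 2 * \<delta>) / (exp \<epsilon> + 1)))
         \<and> quality M D P \<alpha> Learn Unlearn \<ge> (4 - 4 * \<delta>) / (exp \<epsilon> + 1) - 1"
proof -
  have "exp \<epsilon> + 1 > 0"
    by (simp add: add_pos_pos)
  then have bound_eq: "2 * ((exp \<epsilon> - 1 + 2 * \<delta>) / (exp \<epsilon> + 1)) = 2 * (1 - (2 - 2 * \<delta>) / (exp \<epsilon> + 1))"
    "1 - 2 * (1 - (2 - 2 * \<delta>) / (exp \<epsilon> + 1)) = (4 - 4 * \<delta>) / (exp \<epsilon> + 1) - 1"
    by (simp_all add: field_simps)
  have advantage_le: "advantage D P \<alpha> Learn Unlearn A \<le> 2 * (1 - (2 - 2 * \<delta>) / (exp \<epsilon> + 1))"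
    if "A \<in> adversaries M" for A
    unfolding bound_eq(1)[symmetric]
    by (rule advantage_le_of_certified_removal) (use assms that in auto)
  have "(\<lambda>_ _. 0) \<in> adversaries M"
    by (simp add: adversaries_def)
  then have "(SUP A\<in>adversaries M. advantage D P \<alpha> Learn Unlearn A) \<le> 2 * (1 - (2 - 2 * \<delta>) / (exp \<epsilon> + 1))"
    by (intro cSUP_least advantage_le) auto
  then show ?thesis
    using advantage_le bound_eq(2) by (simp add: quality_def)
qed

end
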